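(* Every strictly convex reflexive monotone ordered Banach space with a closed proper generating cone is both a $\upsilon$-quasi-lattice and a $\mu$-quasi-lattice, and its $\upsilon$- and $\mu$-quasi-suprema coincide.
   Context: An ordered Banach space is a real Banach space $X$ with a proper cone $X_+$ (closed under addition and non-negative scaling, $X_+\cap(-X_+)=\{0\}$); $x\le y$ means $y-x\in X_+$; generating means $X=X_+-X_+$; monotone means $0\le x\le y$ implies $\|x\|\le\|y\|$. Strictly convex: $\|x+y\|=\|x\|+\|y\|$ implies one of $x,y$ is a non-negative multiple of the other. For $A\subseteq X$, $\upsilon(A)$ is the set of upper bounds and $\mu(A)$ the set of minimal upper bounds ($z\in\upsilon(A)$ with $A\le w\le z\Rightarrow w=z$). Let $\sigma_{x,y}(z)=\|z-x\|+\|z-y\|$. $X$ (closed cone) is a $\upsilon$-quasi-lattice (resp. $\mu$-quasi-lattice) if for all $x,y$ the set $\upsilon(\{x,y\})$ (resp. $\mu(\{x,y\})$) is non-empty and contains a unique minimizer of $\sigma_{x,y}$ on it, the $\upsilon$- (resp. $\mu$-) quasi-supremum. *)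

theory Defs
  imports "HOL-Analysis.Analysis"
begin

definition proper_cone :: "'a::real_vector set \<Rightarrow> bool" where
  "proper_cone C \<longleftrightarrow> (\<forall>x\<in>C. \<forall>y\<in>C. x + y \<in> C) \<and> (\<forall>x\<in>C. \<forall>t::real. t \<ge> 0 \<longrightarrow> t *\<^sub>R x \<in> C)
     \<and> C \<inter> uminus ` C = {0}"

definition generating_cone :: "'a::real_vector set \<Rightarrow> bool" where
  "generating_cone C \<longleftrightarrow> (\<forall>x. \<exists>p\<in>C. \<exists>q\<in>C. x = p - q)"

definition cle :: "'a::real_vector set \<Rightarrow> 'a \<Rightarrow> 'a \<Rightarrow> bool" where
  "cle C x y \<longleftrightarrow> y - x \<in> C"

definition monotone_norm :: "'a::real_normed_vector set \<Rightarrow> bool" where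
  "monotone_norm C \<longleftrightarrow> (\<forall>x y. cle C 0 x \<and> cle C x y \<longrightarrow> norm x \<le> norm y)"

definition strictly_convex :: "'a::real_normed_vector itself \<Rightarrow> bool" where
  "strictly_convex _ \<longleftrightarrow> (\<forall>x y::'a. norm (x + y) = norm x + norm y \<longrightarrow>
      (\<exists>t::real. t \<ge> 0 \<and> (x = t *\<^sub>R y \<or> y = t *\<^sub>R x)))"

definition reflexive_space :: "'a::real_normed_vector itself \<Rightarrow> bool" where
  "reflexive_space _ \<longleftrightarrow>
     (\<forall>\<phi> :: ('a \<Rightarrow>\<^sub>L real) \<Rightarrow>\<^sub>L real. \<exists>x::'a. \<forall>f. blinfun_apply \<phi> f = blinfun_apply f x)"

definition upper_bounds_c :: "'a::real_vector set \<Rightarrow> 'a set \<Rightarrow> 'a set" where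
  "upper_bounds_c C A = {z. \<forall>a\<in>A. cle C a z}"

definition min_upper_bounds_c :: "'a::real_vector set \<Rightarrow> 'a set \<Rightarrow> 'a set" where
  "min_upper_bounds_c C A = {z \<in> upper_bounds_c C A.
      \<forall>w. (\<forall>a\<in>A. cle C a w) \<and> cle C w z \<longrightarrow> w = z}"

definition sigma_xy :: "'a::real_normed_vector \<Rightarrow> 'a \<Rightarrow> 'a \<Rightarrow> real" where
  "sigma_xy x y z = norm (z - x) + norm (z - y)"

definition is_minimizer :: "'a set \<Rightarrow> ('a \<Rightarrow> real) \<Rightarrow> 'a \<Rightarrow> bool" where
  "is_minimizer S f z \<longleftrightarrow> z \<in> S \<and> (\<forall>w\<in>S. f z \<le> f w)"

definition has_unique_minimizer :: "'a set \<Rightarrow> ('a \<Rightarrow> real) \<Rightarrow> bool" where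
  "has_unique_minimizer S f \<longleftrightarrow> (\<exists>!z. is_minimizer S f z)"

definition the_minimizer :: "'a set \<Rightarrow> ('a \<Rightarrow> real) \<Rightarrow> 'a" where
  "the_minimizer S f = (THE z. is_minimizer S f z)"

definition upsilon_quasi_lattice :: "'a::real_normed_vector set \<Rightarrow> bool" where
  "upsilon_quasi_lattice C \<longleftrightarrow> closed C \<and> (\<forall>x y.
      upper_bounds_c C {x, y} \<noteq> {} \<and> has_unique_minimizer (upper_bounds_c C {x, y}) (sigma_xy x y))"

definition mu_quasi_lattice :: "'a::real_normed_vector set \<Rightarrow> bool" where
  "mu_quasi_lattice C \<longleftrightarrow> closed C \<and> (\<forall>x y.
      min_upper_bounds_c C {x, y} \<noteq> {} \<and> has_unique_minimizer (min_upper_bounds_c C {x, y}) (sigma_xy x y))"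

definition upsilon_qsup :: "'a::real_normed_vector set \<Rightarrow> 'a \<Rightarrow> 'a \<Rightarrow> 'a" where
  "upsilon_qsup C x y = the_minimizer (upper_bounds_c C {x, y}) (sigma_xy x y)"

definition mu_qsup :: "'a::real_normed_vector set \<Rightarrow> 'a \<Rightarrow> 'a \<Rightarrow> 'a" where
  "mu_qsup C x y = the_minimizer (min_upper_bounds_c C {x, y}) (sigma_xy x y)"

end

theory Submission
  imports Defs
begin

text \<open>For fixed \<open>a, b\<close> the upper bounds form the set \<open>V = (a + C) \<inter> (b + C)\<close>, which is
  nonempty because \<open>C\<close> is generating. A minimizing sequence for \<open>\<sigma>\<close> on \<open>V\<close> is
  bounded, so by reflexivity it has a weak limit point; this point stays in the closed convex
  set \<open>V\<close>, and \<open>\<sigma>\<close> is not larger there since the norm is weakly lower semicontinuous. Both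
  facts rest on the Hahn-Banach theorem for sublinear functionals.

  If \<open>z\<^sub>1, z\<^sub>2\<close> minimize \<open>\<sigma>\<close> on \<open>V\<close>, so does their midpoint, which forces equality in the
  triangle inequality for \<open>(z\<^sub>1 - a) + (z\<^sub>2 - a)\<close>. By strict convexity \<open>z\<^sub>1 - a\<close> and \<open>z\<^sub>2 - a\<close>
  are nonnegative multiples of each other, so \<open>z\<^sub>1\<close> and \<open>z\<^sub>2\<close> are comparable; monotonicity of
  the norm then gives \<open>\<parallel>z\<^sub>1 - a\<parallel> = \<parallel>z\<^sub>2 - a\<parallel>\<close>, and strict convexity \<open>z\<^sub>1 = z\<^sub>2\<close>. An upper
  bound below the minimizer has no larger \<open>\<sigma>\<close>, again by monotonicity, so the unique minimizer
  is a minimal upper bound and hence also the unique minimizer over minimal upper bounds.\<close>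

section \<open>Hahn-Banach for sublinear functionals\<close>

definition sublinear :: "('a::real_vector \<Rightarrow> real) \<Rightarrow> bool" where
  "sublinear p \<longleftrightarrow> (\<forall>x y. p (x + y) \<le> p x + p y) \<and> (\<forall>t x. 0 < t \<longrightarrow> p (t *\<^sub>R x) \<le> t * p x)"

lemma sublinearI:
  assumes "\<And>x y. p (x + y) \<le> p x + p y" and "\<And>t x. 0 < t \<Longrightarrow> p (t *\<^sub>R x) \<le> t * p x"
  shows "sublinear p"
  using assms unfolding sublinear_def by blast

lemma sublinearD:
  assumes "sublinear p"
  shows sublinear_add: "p (x + y) \<le> p x + p y"
    and sublinear_scaleR: "0 < t \<Longrightarrow> p (t *\<^sub>R x) \<le> t * p x"
  using assms unfolding sublinear_def by blast+

lemma sublinear_scaleR_inverse: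
  assumes "sublinear p" "0 < t"
  shows "t * p ((1 / t) *\<^sub>R x) \<le> p x"
  using sublinear_scaleR[OF assms(1), of "1 / t" x] assms(2) by (simp add: field_simps)

lemma sublinear_zero:
  assumes "sublinear p"
  shows "p 0 = 0"
  using sublinear_add[OF assms, of 0 0] sublinear_scaleR[OF assms, of "1/2" 0] by simp

definition dominated_linear_graph :: "('a::real_vector \<Rightarrow> real) \<Rightarrow> ('a \<times> real) set \<Rightarrow> bool" where
  "dominated_linear_graph p G \<longleftrightarrow>
     (\<forall>x a y b. (x, a) \<in> G \<longrightarrow> (y, b) \<in> G \<longrightarrow> (x + y, a + b) \<in> G) \<and>
     (\<forall>x a t. (x, a) \<in> G \<longrightarrow> (t *\<^sub>R x, t * a) \<in> G) \<and>
     (\<forall>x a b. (x, a) \<in> G \<longrightarrow> (x, b) \<in> G \<longrightarrow> a = b) \<and>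
     (\<forall>x a. (x, a) \<in> G \<longrightarrow> a \<le> p x)"

lemma dominated_linear_graphI:
  assumes "\<And>x a y b. (x, a) \<in> G \<Longrightarrow> (y, b) \<in> G \<Longrightarrow> (x + y, a + b) \<in> G"
    and "\<And>x a t. (x, a) \<in> G \<Longrightarrow> (t *\<^sub>R x, t * a) \<in> G"
    and "\<And>x a b. (x, a) \<in> G \<Longrightarrow> (x, b) \<in> G \<Longrightarrow> a = b"
    and "\<And>x a. (x, a) \<in> G \<Longrightarrow> a \<le> p x"
  shows "dominated_linear_graph p G"
  using assms unfolding dominated_linear_graph_def by blast

lemma dominated_linear_graphD:
  assumes "dominated_linear_graph p G"
  shows dominated_linear_graph_add: "(x, a) \<in> G \<Longrightarrow> (y, b) \<in> G \<Longrightarrow> (x + y, a + b) \<in> G"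
    and dominated_linear_graph_scaleR: "(x, a) \<in> G \<Longrightarrow> (t *\<^sub>R x, t * a) \<in> G"
    and dominated_linear_graph_unique: "(x, a) \<in> G \<Longrightarrow> (x, b) \<in> G \<Longrightarrow> a = b"
    and dominated_linear_graph_le: "(x, a) \<in> G \<Longrightarrow> a \<le> p x"
  using assms unfolding dominated_linear_graph_def by blast+

lemma dominated_linear_graph_gap:
  assumes p: "sublinear p" and M: "dominated_linear_graph p M" "M \<noteq> {}"
  obtains c where "\<And>s a. (s, a) \<in> M \<Longrightarrow> a - p (s - v) \<le> c"
    and "\<And>s a. (s, a) \<in> M \<Longrightarrow> c \<le> p (s + v) - a"
proof -
  define S where "S = {a - p (s - v) | s a. (s, a) \<in> M}"
  have gap: "a - p (s - v) \<le> p (s' + v) - a'" if "(s, a) \<in> M" "(s', a') \<in> M" for s a s' a'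
  proof -
    have "a + a' \<le> p ((s - v) + (s' + v))"
      using dominated_linear_graph_le[OF M(1) dominated_linear_graph_add[OF M(1) that]] by simp
    also have "\<dots> \<le> p (s - v) + p (s' + v)" by (rule sublinear_add[OF p])
    finally show ?thesis by simp
  qed
  obtain s0 a0 where s0: "(s0, a0) \<in> M" using M(2) by auto
  have "S \<noteq> {}" "bdd_above S" using s0 gap unfolding S_def bdd_above_def by blast+
  then show ?thesis
    using gap by (intro that[of "Sup S"] cSup_upper cSup_least) (auto simp: S_def)
qed

lemma dominated_linear_graph_extend_le:
  assumes p: "sublinear p" and M: "dominated_linear_graph p M" and xa: "(x, a) \<in> M"
    and lo: "\<And>s a. (s, a) \<in> M \<Longrightarrow> a - p (s - v) \<le> c"
    and hi: "\<And>s a. (s, a) \<in> M \<Longrightarrow> c \<le> p (s + v) - a"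
  shows "a + t * c \<le> p (x + t *\<^sub>R v)"
proof (cases t "0::real" rule: linorder_cases)
  case less
  define u where "u = - t"
  have u: "0 < u" using less by (simp add: u_def)
  have "a / u - p ((1 / u) *\<^sub>R x - v) \<le> c"
    using lo[OF dominated_linear_graph_scaleR[OF M xa, of "1 / u"]] by simp
  moreover have "(1 / u) *\<^sub>R x - v = (1 / u) *\<^sub>R (x + t *\<^sub>R v)"
    using u by (simp add: u_def algebra_simps)
  ultimately have "a - u * c \<le> u * p ((1 / u) *\<^sub>R (x + t *\<^sub>R v))"
    using u by (simp add: field_simps)
  also have "\<dots> \<le> p (x + t *\<^sub>R v)" by (rule sublinear_scaleR_inverse[OF p u])
  finally show ?thesis by (simp add: u_def)
next
  case equal
  then show ?thesis using dominated_linear_graph_le[OF M xa] by simp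
next
  case greater
  have "c \<le> p ((1 / t) *\<^sub>R x + v) - a / t"
    using hi[OF dominated_linear_graph_scaleR[OF M xa, of "1 / t"]] by simp
  moreover have "(1 / t) *\<^sub>R x + v = (1 / t) *\<^sub>R (x + t *\<^sub>R v)"
    using greater by (simp add: algebra_simps)
  ultimately have "a + t * c \<le> t * p ((1 / t) *\<^sub>R (x + t *\<^sub>R v))"
    using greater by (simp add: field_simps)
  also have "\<dots> \<le> p (x + t *\<^sub>R v)" by (rule sublinear_scaleR_inverse[OF p greater])
  finally show ?thesis .
qed

definition graph_extension :: "('a::real_vector \<times> real) set \<Rightarrow> 'a \<Rightarrow> real \<Rightarrow> ('a \<times> real) set" where
  "graph_extension M v c = {(x + t *\<^sub>R v, a + t * c) | x a t. (x, a) \<in> M}"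

lemma subset_graph_extension: "M \<subseteq> graph_extension M v c"
proof
  fix z assume "z \<in> M"
  then show "z \<in> graph_extension M v c" unfolding graph_extension_def
    by (intro CollectI exI[of _ "fst z"] exI[of _ "snd z"] exI[of _ "0::real"]) simp
qed

lemma graph_extension_mem: "(0, 0) \<in> M \<Longrightarrow> (v, c) \<in> graph_extension M v c"
  unfolding graph_extension_def
  by (intro CollectI exI[of _ 0] exI[of _ "0::real"] exI[of _ "1::real"]) simp

lemma dominated_linear_graph_offset_unique:
  assumes M: "dominated_linear_graph p M" and v: "\<And>a. (v, a) \<notin> M"
    and M12: "(x1, a1) \<in> M" "(x2, a2) \<in> M" and x: "x1 + t1 *\<^sub>R v = x2 + t2 *\<^sub>R v"
  shows "t1 = t2"
proof (rule ccontr)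
  assume "t1 \<noteq> t2"
  have "x2 + (- 1) *\<^sub>R x1 = (t1 - t2) *\<^sub>R v"
    using x by (simp add: algebra_simps)
  then have "v = (1 / (t1 - t2)) *\<^sub>R (x2 + (- 1) *\<^sub>R x1)"
    using \<open>t1 \<noteq> t2\<close> by simp
  moreover have "((1 / (t1 - t2)) *\<^sub>R (x2 + (- 1) *\<^sub>R x1), (1 / (t1 - t2)) * (a2 + (- 1) * a1)) \<in> M"
    using M12 by (intro dominated_linear_graph_scaleR[OF M] dominated_linear_graph_add[OF M])
  ultimately show False using v by simp
qed

lemma dominated_linear_graph_extension:
  assumes p: "sublinear p" and M: "dominated_linear_graph p M" and v: "\<And>a. (v, a) \<notin> M"
    and lo: "\<And>s a. (s, a) \<in> M \<Longrightarrow> a - p (s - v) \<le> c"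
    and hi: "\<And>s a. (s, a) \<in> M \<Longrightarrow> c \<le> p (s + v) - a"
  shows "dominated_linear_graph p (graph_extension M v c)"
proof (rule dominated_linear_graphI; unfold graph_extension_def)
  fix x a y b
  assume "(x, a) \<in> {(x + t *\<^sub>R v, a + t * c) | x a t. (x, a) \<in> M}"
    "(y, b) \<in> {(x + t *\<^sub>R v, a + t * c) | x a t. (x, a) \<in> M}"
  then obtain x1 a1 t1 x2 a2 t2 where "(x1, a1) \<in> M" "(x2, a2) \<in> M"
    and "x = x1 + t1 *\<^sub>R v" "a = a1 + t1 * c" "y = x2 + t2 *\<^sub>R v" "b = a2 + t2 * c"
    by blast
  then show "(x + y, a + b) \<in> {(x + t *\<^sub>R v, a + t * c) | x a t. (x, a) \<in> M}"
    using dominated_linear_graph_add[OF M]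
    by (intro CollectI exI[of _ "x1 + x2"] exI[of _ "a1 + a2"] exI[of _ "t1 + t2"])
      (auto simp: algebra_simps)
next
  fix x a r
  assume "(x, a) \<in> {(x + t *\<^sub>R v, a + t * c) | x a t. (x, a) \<in> M}"
  then obtain x1 a1 t where "(x1, a1) \<in> M" "x = x1 + t *\<^sub>R v" "a = a1 + t * c"
    by blast
  then show "(r *\<^sub>R x, r * a) \<in> {(x + t *\<^sub>R v, a + t * c) | x a t. (x, a) \<in> M}"
    using dominated_linear_graph_scaleR[OF M]
    by (intro CollectI exI[of _ "r *\<^sub>R x1"] exI[of _ "r * a1"] exI[of _ "r * t"])
      (auto simp: algebra_simps)
next
  fix x a b
  assume "(x, a) \<in> {(x + t *\<^sub>R v, a + t * c) | x a t. (x, a) \<in> M}"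
    "(x, b) \<in> {(x + t *\<^sub>R v, a + t * c) | x a t. (x, a) \<in> M}"
  then obtain x1 a1 t1 x2 a2 t2 where M12: "(x1, a1) \<in> M" "(x2, a2) \<in> M"
    and x: "x = x1 + t1 *\<^sub>R v" "x = x2 + t2 *\<^sub>R v" and ab: "a = a1 + t1 * c" "b = a2 + t2 * c"
    by blast
  have "t1 = t2" using x by (intro dominated_linear_graph_offset_unique[OF M v M12]) simp
  then show "a = b"
    using x ab dominated_linear_graph_unique[OF M M12(1)] M12(2) by auto
next
  fix x a
  assume "(x, a) \<in> {(x + t *\<^sub>R v, a + t * c) | x a t. (x, a) \<in> M}"
  then show "a \<le> p x"
    using dominated_linear_graph_extend_le[OF p M _ lo hi] by blast
qed

lemma dominated_linear_graph_chain_Union: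
  assumes "subset.chain {G. dominated_linear_graph p G} Cs"
  shows "dominated_linear_graph p (\<Union>Cs)"
proof -
  have G: "\<And>G. G \<in> Cs \<Longrightarrow> dominated_linear_graph p G"
    using assms unfolding subset_chain_def by blast
  have common: "\<exists>G\<in>Cs. u \<in> G \<and> w \<in> G" if "u \<in> \<Union>Cs" "w \<in> \<Union>Cs" for u w
    using that assms unfolding subset_chain_def by blast
  show ?thesis
  proof (rule dominated_linear_graphI)
    show "(x + y, a + b) \<in> \<Union>Cs" if "(x, a) \<in> \<Union>Cs" "(y, b) \<in> \<Union>Cs" for x a y b
      using common[OF that] G dominated_linear_graph_add by blast
    show "(t *\<^sub>R x, t * a) \<in> \<Union>Cs" if "(x, a) \<in> \<Union>Cs" for x a t
      using that G dominated_linear_graph_scaleR by (metis UnionE UnionI)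
    show "a = b" if "(x, a) \<in> \<Union>Cs" "(x, b) \<in> \<Union>Cs" for x a b
      using common[OF that] G dominated_linear_graph_unique by blast
    show "a \<le> p x" if "(x, a) \<in> \<Union>Cs" for x a
      using that G dominated_linear_graph_le by (metis UnionE)
  qed
qed

lemma dominated_linear_graph_total_functional:
  assumes M: "dominated_linear_graph p M" and total: "\<And>x. \<exists>a. (x, a) \<in> M"
  obtains f where "linear f" "\<And>x. f x \<le> p x" "\<And>x a. (x, a) \<in> M \<Longrightarrow> f x = a"
proof -
  define f where "f x = (THE a. (x, a) \<in> M)" for x
  have fM: "(x, f x) \<in> M" for x
    unfolding f_def using total[of x] dominated_linear_graph_unique[OF M] by (metis theI)
  have f_eq: "f x = a" if "(x, a) \<in> M" for x a
    using dominated_linear_graph_unique[OF M that fM] by simp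
  have "linear f"
    by (rule linearI; rule f_eq)
      (use dominated_linear_graph_add[OF M fM fM] dominated_linear_graph_scaleR[OF M fM] in auto)
  then show ?thesis
    using that f_eq fM dominated_linear_graph_le[OF M] by blast
qed

lemma dominated_linear_graph_maximal:
  assumes G0: "dominated_linear_graph p G0"
  obtains M where "dominated_linear_graph p M" "G0 \<subseteq> M"
    "\<And>G. dominated_linear_graph p G \<Longrightarrow> M \<subseteq> G \<Longrightarrow> G = M"
proof -
  define A where "A = {G. G0 \<subseteq> G \<and> dominated_linear_graph p G}"
  have "\<exists>M\<in>A. \<forall>G\<in>A. M \<subseteq> G \<longrightarrow> G = M"
  proof (rule subset_Zorn_nonempty)
    show "A \<noteq> {}" using G0 unfolding A_def by blast
  next
    fix Cs assume ne: "Cs \<noteq> {}" and ch: "subset.chain A Cs"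
    then have "subset.chain {G. dominated_linear_graph p G} Cs"
      unfolding A_def subset_chain_def by blast
    then have "dominated_linear_graph p (\<Union>Cs)"
      by (rule dominated_linear_graph_chain_Union)
    moreover have "G0 \<subseteq> \<Union>Cs"
      using ne ch unfolding A_def subset_chain_def by blast
    ultimately show "\<Union>Cs \<in> A" unfolding A_def by blast
  qed
  then obtain M where "M \<in> A" and max: "\<And>G. G \<in> A \<Longrightarrow> M \<subseteq> G \<Longrightarrow> G = M"
    by blast
  then have M: "dominated_linear_graph p M" "G0 \<subseteq> M" unfolding A_def by auto
  moreover have "G = M" if "dominated_linear_graph p G" "M \<subseteq> G" for G
    using max[of G] that M(2) unfolding A_def by blast
  ultimately show ?thesis by (rule that)
qed

lemma hahn_banach_graph:
  assumes p: "sublinear p" and G0: "dominated_linear_graph p G0" "G0 \<noteq> {}"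
  obtains f where "linear f" "\<And>x. f x \<le> p x" "\<And>x a. (x, a) \<in> G0 \<Longrightarrow> f x = a"
proof -
  obtain M where M: "dominated_linear_graph p M" "G0 \<subseteq> M"
    and max: "\<And>G. dominated_linear_graph p G \<Longrightarrow> M \<subseteq> G \<Longrightarrow> G = M"
    using dominated_linear_graph_maximal[OF G0(1)] by blast
  obtain x0 a0 where "(x0, a0) \<in> M" using M(2) G0(2) by auto
  then have "(0, 0) \<in> M" using dominated_linear_graph_scaleR[OF M(1), of x0 a0 0] by simp
  have total: "\<exists>a. (v, a) \<in> M" for v
  proof (rule ccontr)
    assume v: "\<nexists>a. (v, a) \<in> M"
    obtain c where lo: "\<And>s a. (s, a) \<in> M \<Longrightarrow> a - p (s - v) \<le> c"
      and hi: "\<And>s a. (s, a) \<in> M \<Longrightarrow> c \<le> p (s + v) - a"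
      using dominated_linear_graph_gap[OF p M(1)] \<open>(0, 0) \<in> M\<close> by blast
    have "graph_extension M v c = M"
      using dominated_linear_graph_extension[OF p M(1) _ lo hi] v subset_graph_extension
      by (intro max) blast+
    then show False using graph_extension_mem[OF \<open>(0, 0) \<in> M\<close>, of v c] v by blast
  qed
  obtain f where "linear f" "\<And>x. f x \<le> p x" "\<And>x a. (x, a) \<in> M \<Longrightarrow> f x = a"
    using dominated_linear_graph_total_functional[OF M(1) total] by blast
  then show ?thesis using that M(2) by blast
qed

lemma hahn_banach_point:
  assumes p: "sublinear p" and c: "c \<le> p v" "- c \<le> p (- v)"
  obtains f where "linear f" "\<And>x. f x \<le> p x" "f v = c"
proof -
  have G0: "dominated_linear_graph p {(0, 0)}"
    by (rule dominated_linear_graphI) (auto simp: sublinear_zero[OF p])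
  show ?thesis
  proof (cases "v = 0")
    case True
    then have "c = 0" using c by (simp add: sublinear_zero[OF p])
    then show ?thesis
      using hahn_banach_graph[OF p G0] True that by (metis insert_not_empty linear_0)
  next
    case False
    have "dominated_linear_graph p (graph_extension {(0, 0)} v c)"
      using False c by (intro dominated_linear_graph_extension[OF p G0]) auto
    moreover have "(v, c) \<in> graph_extension {(0, 0)} v c" by (simp add: graph_extension_mem)
    ultimately show ?thesis
      using hahn_banach_graph[OF p] that by blast
  qed
qed

lemma hahn_banach_bounded:
  fixes p :: "'a::real_normed_vector \<Rightarrow> real"
  assumes p: "sublinear p" and K: "\<And>x. p x \<le> K * norm x" and c: "c \<le> p v" "- c \<le> p (- v)"
  obtains f :: "'a \<Rightarrow>\<^sub>L real" where "\<And>x. f x \<le> p x" "f v = c"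
proof -
  obtain f where f: "linear f" "\<And>x. f x \<le> p x" "f v = c"
    using hahn_banach_point[OF p c] by blast
  have "\<bar>f x\<bar> \<le> norm x * K" for x
    using f(2)[of x] f(2)[of "- x"] K[of x] K[of "- x"] linear_neg[OF f(1), of x]
    by (simp add: abs_le_iff mult.commute)
  then have "bounded_linear f"
    using f(1) by (intro bounded_linear_intro[where K = K]) (simp_all add: linear_add linear_scale)
  then show ?thesis
    using that[of "Blinfun f"] f by (simp add: bounded_linear_Blinfun_apply)
qed

lemma sublinear_norm: "sublinear norm"
  by (rule sublinearI) (simp_all add: norm_triangle_ineq)

lemma norming_functional:
  fixes w :: "'a::real_normed_vector"
  obtains f :: "'a \<Rightarrow>\<^sub>L real" where "\<And>x. f x \<le> norm x" "f w = norm w"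
  using hahn_banach_bounded[OF sublinear_norm, of 1 "norm w" w] by auto

lemma le_infdistI: "A \<noteq> {} \<Longrightarrow> (\<And>a. a \<in> A \<Longrightarrow> r \<le> dist x a) \<Longrightarrow> r \<le> infdist x A"
  unfolding infdist_def by (simp add: cINF_greatest)

lemma sublinear_infdist_convex_cone:
  fixes C :: "'a::real_normed_vector set"
  assumes C: "convex_cone C"
  shows "sublinear (\<lambda>x. infdist x C)"
proof (rule sublinearI)
  have ne: "C \<noteq> {}" using convex_cone_nonempty[OF C] .
  fix x y :: 'a
  have "infdist (x + y) C \<le> dist x c1 + dist y c2" if "c1 \<in> C" "c2 \<in> C" for c1 c2
  proof -
    have "infdist (x + y) C \<le> dist (x + y) (c1 + c2)"
      using convex_cone_add[OF C that] by (rule infdist_le)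
    also have "\<dots> \<le> dist x c1 + dist y c2"
      unfolding dist_norm using norm_triangle_ineq[of "x - c1" "y - c2"] by (simp add: algebra_simps)
    finally show ?thesis .
  qed
  then have "infdist (x + y) C - dist y c2 \<le> infdist x C" if "c2 \<in> C" for c2
    using that by (intro le_infdistI[OF ne]) (simp add: algebra_simps)
  then have "infdist (x + y) C - infdist x C \<le> infdist y C"
    by (intro le_infdistI[OF ne]) (simp add: algebra_simps)
  then show "infdist (x + y) C \<le> infdist x C + infdist y C" by simp
next
  have ne: "C \<noteq> {}" using convex_cone_nonempty[OF C] .
  fix t :: real and x :: 'a
  assume t: "0 < t"
  have "infdist (t *\<^sub>R x) C / t \<le> dist x c" if "c \<in> C" for c
  proof -
    have "infdist (t *\<^sub>R x) C \<le> dist (t *\<^sub>R x) (t *\<^sub>R c)"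
      using convex_cone_scaleR[OF C _ that, of t] t by (intro infdist_le) simp
    also have "\<dots> = t * dist x c"
      using t by (simp add: dist_norm flip: scaleR_diff_right)
    finally show ?thesis using t by (simp add: divide_le_eq mult.commute)
  qed
  then have "infdist (t *\<^sub>R x) C / t \<le> infdist x C" by (rule le_infdistI[OF ne])
  then show "infdist (t *\<^sub>R x) C \<le> t * infdist x C" using t by (simp add: divide_le_eq mult.commute)
qed

lemma convex_cone_separation:
  fixes C :: "'a::real_normed_vector set"
  assumes C: "convex_cone C" "closed C" and v: "v \<notin> C"
  obtains f :: "'a \<Rightarrow>\<^sub>L real" where "0 < f v" "\<And>c. c \<in> C \<Longrightarrow> f c \<le> 0"
proof -
  let ?p = "\<lambda>x. infdist x C"
  have "0 \<in> C" by (rule convex_cone_contains_0[OF C(1)])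
  have pv: "0 < ?p v"
    using in_closed_iff_infdist_zero[OF C(2)] v infdist_nonneg[of v C] \<open>0 \<in> C\<close> by force
  have "?p x \<le> 1 * norm x" for x using infdist_le[OF \<open>0 \<in> C\<close>, of x] by simp
  moreover have "- ?p v \<le> ?p (- v)" using pv infdist_nonneg[of "- v" C] by simp
  ultimately obtain f :: "'a \<Rightarrow>\<^sub>L real" where "\<And>x. f x \<le> ?p x" "f v = ?p v"
    using hahn_banach_bounded[OF sublinear_infdist_convex_cone[OF C(1)], of 1 "?p v" v] by auto
  then show ?thesis using that pv by (metis infdist_zero)
qed

section \<open>Weak limit points in reflexive spaces\<close>

text \<open>Only meaningful for bounded sequences, which every lemma below assumes.\<close>

definition real_limsup :: "(nat \<Rightarrow> real) \<Rightarrow> real" where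
  "real_limsup u = (INF N. SUP n\<in>{N..}. u n)"

lemma tail_SUP_bounds:
  fixes u :: "nat \<Rightarrow> real"
  assumes B: "\<And>n. \<bar>u n\<bar> \<le> B"
  shows tail_SUP_upper: "N \<le> n \<Longrightarrow> u n \<le> (SUP n\<in>{N..}. u n)"
    and tail_SUP_lower_bound: "- B \<le> (SUP n\<in>{N..}. u n)"
proof -
  have bdd: "bdd_above (u ` {N..})" using B by (intro bdd_aboveI2[of _ _ B]) (auto simp: abs_le_iff)
  show upper: "u n \<le> (SUP n\<in>{N..}. u n)" if "N \<le> n" for n
    using that by (intro cSUP_upper[OF _ bdd]) simp
  show "- B \<le> (SUP n\<in>{N..}. u n)"
    using upper[of N] B[of N] by (simp add: abs_le_iff)
qed

lemma real_limsup_leI: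
  assumes B: "\<And>n. \<bar>u n\<bar> \<le> B" and r: "\<And>e. 0 < e \<Longrightarrow> eventually (\<lambda>n. u n \<le> r + e) sequentially"
  shows "real_limsup u \<le> r"
proof (rule field_le_epsilon)
  fix e :: real assume "0 < e"
  then obtain N where N: "\<And>n. N \<le> n \<Longrightarrow> u n \<le> r + e"
    using r unfolding eventually_sequentially by blast
  have "real_limsup u \<le> (SUP n\<in>{N..}. u n)"
    unfolding real_limsup_def
    by (rule cINF_lower) (auto intro: bdd_belowI2 tail_SUP_lower_bound[OF B])
  also have "\<dots> \<le> r + e" using N by (intro cSUP_least) auto
  finally show "real_limsup u \<le> r + e" .
qed

lemma eventually_le_real_limsup:
  assumes B: "\<And>n. \<bar>u n\<bar> \<le> B" and e: "0 < e"
  shows "eventually (\<lambda>n. u n \<le> real_limsup u + e) sequentially"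
proof -
  have "(INF N. SUP n\<in>{N..}. u n) < real_limsup u + e"
    using e unfolding real_limsup_def by simp
  then obtain N where "(SUP n\<in>{N..}. u n) < real_limsup u + e"
    by (subst (asm) cINF_less_iff) (auto intro: bdd_belowI2 tail_SUP_lower_bound[OF B])
  then show ?thesis
    unfolding eventually_sequentially using tail_SUP_upper[OF B] by (meson less_imp_le order_trans)
qed

text \<open>By Hahn-Banach, this says that \<open>x\<close> lies in the closed convex hull of every tail of \<open>z\<close>.\<close>

definition weak_limsup_point :: "(nat \<Rightarrow> 'a::real_normed_vector) \<Rightarrow> 'a \<Rightarrow> bool" where
  "weak_limsup_point z x \<longleftrightarrow> (\<forall>(f :: 'a \<Rightarrow>\<^sub>L real) r.
     (\<forall>e>0. eventually (\<lambda>n. f (z n) \<le> r + e) sequentially) \<longrightarrow> f x \<le> r)"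

lemma weak_limsup_pointD:
  fixes f :: "'a::real_normed_vector \<Rightarrow>\<^sub>L real"
  assumes "weak_limsup_point z x" "\<And>e. 0 < e \<Longrightarrow> eventually (\<lambda>n. f (z n) \<le> r + e) sequentially"
  shows "f x \<le> r"
  using assms unfolding weak_limsup_point_def by blast

lemma real_limsup_le_bound:
  assumes "\<And>n. \<bar>u n\<bar> \<le> B"
  shows "real_limsup u \<le> B"
  using assms by (intro real_limsup_leI[OF assms]) (simp add: abs_le_iff add_increasing2)

lemma abs_blinfun_le_bound:
  fixes f :: "'a::real_normed_vector \<Rightarrow>\<^sub>L real"
  assumes "norm y \<le> B"
  shows "\<bar>f y\<bar> \<le> B * norm f"
  using norm_blinfun[of f y] mult_left_mono[OF assms norm_ge_zero[of f]] by (simp add: mult.commute)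

lemma sublinear_real_limsup_blinfun:
  fixes z :: "nat \<Rightarrow> 'a::real_normed_vector"
  assumes B: "\<And>n. norm (z n) \<le> B"
  shows "sublinear (\<lambda>f::'a \<Rightarrow>\<^sub>L real. real_limsup (\<lambda>n. f (z n)))" (is "sublinear ?p")
proof (rule sublinearI)
  note bnd = abs_blinfun_le_bound[OF B]
  fix f g :: "'a \<Rightarrow>\<^sub>L real"
  show "?p (f + g) \<le> ?p f + ?p g"
  proof (rule real_limsup_leI[OF bnd])
    fix e :: real assume "0 < e"
    then have "eventually (\<lambda>n. f (z n) \<le> ?p f + e / 2) sequentially"
      and "eventually (\<lambda>n. g (z n) \<le> ?p g + e / 2) sequentially"
      by (simp_all add: eventually_le_real_limsup[OF bnd])
    then show "eventually (\<lambda>n. (f + g) (z n) \<le> ?p f + ?p g + e) sequentially"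
      by eventually_elim (simp add: plus_blinfun.rep_eq)
  qed
  fix t :: real
  assume t: "0 < t"
  show "?p (t *\<^sub>R f) \<le> t * ?p f"
  proof (rule real_limsup_leI[OF bnd])
    fix e :: real assume "0 < e"
    then have "eventually (\<lambda>n. f (z n) \<le> ?p f + e / t) sequentially"
      using t by (simp add: eventually_le_real_limsup[OF bnd])
    then show "eventually (\<lambda>n. (t *\<^sub>R f) (z n) \<le> t * ?p f + e) sequentially"
    proof eventually_elim
      case (elim n)
      then have "t * f (z n) \<le> t * (?p f + e / t)" using t by simp
      then show ?case using t by (simp add: scaleR_blinfun.rep_eq algebra_simps)
    qed
  qed
qed

text \<open>A Hahn-Banach functional below \<open>f \<mapsto> limsup f (z n)\<close> lies in the bidual, hence is
  evaluation at some \<open>x\<close>.\<close>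

lemma reflexive_bounded_seq_weak_limsup_point:
  fixes z :: "nat \<Rightarrow> 'a::real_normed_vector"
  assumes refl: "reflexive_space TYPE('a)" and B: "\<And>n. norm (z n) \<le> B"
  obtains x where "weak_limsup_point z x"
proof -
  let ?p = "\<lambda>f::'a \<Rightarrow>\<^sub>L real. real_limsup (\<lambda>n. f (z n))"
  note bnd = abs_blinfun_le_bound[OF B]
  have p: "sublinear ?p" by (rule sublinear_real_limsup_blinfun[OF B])
  have "0 \<le> ?p 0" "- 0 \<le> ?p (- 0)" using sublinear_zero[OF p] by simp_all
  then obtain \<Phi> :: "('a \<Rightarrow>\<^sub>L real) \<Rightarrow>\<^sub>L real" where \<Phi>: "\<And>f. \<Phi> f \<le> ?p f"
    using hahn_banach_bounded[OF p real_limsup_le_bound[OF bnd]] by blast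
  obtain x where x: "\<And>f. \<Phi> f = f x" using refl unfolding reflexive_space_def by blast
  have "f x \<le> r" if "\<forall>e>0. eventually (\<lambda>n. f (z n) \<le> r + e) sequentially"
    for f :: "'a \<Rightarrow>\<^sub>L real" and r
  proof -
    have "?p f \<le> r" using that by (intro real_limsup_leI[OF bnd]) simp
    then show ?thesis using \<Phi>[of f] x[of f] by simp
  qed
  then have "weak_limsup_point z x" unfolding weak_limsup_point_def by blast
  then show ?thesis by (rule that)
qed

lemma weak_limsup_point_closed_cone:
  fixes z :: "nat \<Rightarrow> 'a::real_normed_vector"
  assumes C: "convex_cone C" "closed C" and x: "weak_limsup_point z x" and z: "\<And>n. z n - c \<in> C"
  shows "x - c \<in> C"
proof (rule ccontr)
  assume "x - c \<notin> C"
  then obtain f :: "'a \<Rightarrow>\<^sub>L real" where f: "0 < f (x - c)" "\<And>y. y \<in> C \<Longrightarrow> f y \<le> 0"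
    using convex_cone_separation[OF C] by blast
  have "f (z n) \<le> f c + e" if "0 < e" for n e
    using f(2)[OF z[of n]] that by (simp add: blinfun.diff_right)
  then have "f x \<le> f c" by (intro weak_limsup_pointD[OF x]) simp
  then show False using f(1) by (simp add: blinfun.diff_right)
qed

lemma weak_limsup_point_sigma_le:
  fixes z :: "nat \<Rightarrow> 'a::real_normed_vector"
  assumes x: "weak_limsup_point z x" and lim: "(\<lambda>n. sigma_xy a b (z n)) \<longlonglongrightarrow> m"
  shows "sigma_xy a b x \<le> m"
proof -
  obtain g :: "'a \<Rightarrow>\<^sub>L real" where g: "\<And>y. g y \<le> norm y" "g (x - a) = norm (x - a)"
    using norming_functional[of "x - a"] by blast
  obtain h :: "'a \<Rightarrow>\<^sub>L real" where h: "\<And>y. h y \<le> norm y" "h (x - b) = norm (x - b)"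
    using norming_functional[of "x - b"] by blast
  have split: "(g + h) y = g (y - a) + h (y - b) + (g a + h b)" for y
    by (simp add: plus_blinfun.rep_eq blinfun.diff_right)
  have "(g + h) x \<le> m + (g a + h b)"
  proof (rule weak_limsup_pointD[OF x])
    fix e :: real assume "0 < e"
    then have "eventually (\<lambda>n. sigma_xy a b (z n) < m + e) sequentially"
      using order_tendstoD(2)[OF lim, of "m + e"] by simp
    then show "eventually (\<lambda>n. (g + h) (z n) \<le> m + (g a + h b) + e) sequentially"
    proof eventually_elim
      case (elim n)
      then show ?case
        using g(1)[of "z n - a"] h(1)[of "z n - b"] unfolding split sigma_xy_def by simp
    qed
  qed
  then show ?thesis using g(2) h(2) unfolding split sigma_xy_def by simp
qed

section \<open>Minimizers of \<open>\<sigma>\<close> over upper bounds\<close>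

lemma upper_bounds_c_pair: "upper_bounds_c C {a, b} = {z. z - a \<in> C \<and> z - b \<in> C}"
  by (auto simp: upper_bounds_c_def cle_def)

lemma upper_bounds_c_pair_nonempty:
  assumes "generating_cone C"
  shows "upper_bounds_c C {a, b} \<noteq> {}"
proof -
  obtain p q where "p \<in> C" "q \<in> C" "a - b = p - q"
    using assms unfolding generating_cone_def by blast
  moreover have "a + q - b = p" using \<open>a - b = p - q\<close> by (simp add: algebra_simps)
  ultimately have "a + q \<in> upper_bounds_c C {a, b}"
    unfolding upper_bounds_c_pair by simp
  then show ?thesis by blast
qed

lemma sigma_minimizer_exists:
  fixes C :: "'a::real_normed_vector set"
  assumes C: "convex_cone C" "closed C" "generating_cone C" and refl: "reflexive_space TYPE('a)"
  obtains x where "is_minimizer (upper_bounds_c C {a, b}) (sigma_xy a b) x"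
proof -
  let ?U = "upper_bounds_c C {a, b}" and ?s = "sigma_xy a b"
  define m where "m = Inf (?s ` ?U)"
  have bdd: "bdd_below (?s ` ?U)" by (rule bdd_belowI2[of _ 0]) (simp add: sigma_xy_def)
  have "m \<in> closure (?s ` ?U)"
    unfolding m_def using upper_bounds_c_pair_nonempty[OF C(3)] bdd
    by (intro closure_contains_Inf) auto
  then obtain t where t: "\<And>n. t n \<in> ?s ` ?U" and lim: "t \<longlonglongrightarrow> m"
    unfolding closure_sequential by blast
  have "\<forall>n. \<exists>w. w \<in> ?U \<and> t n = ?s w" using t by blast
  then obtain z where z: "\<And>n. z n \<in> ?U" "\<And>n. t n = ?s (z n)"
    using choice[of "\<lambda>n w. w \<in> ?U \<and> t n = ?s w"] by blast
  have lim: "(\<lambda>n. ?s (z n)) \<longlonglongrightarrow> m" using lim unfolding z(2) .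
  obtain K where K: "\<And>n. norm (?s (z n)) \<le> K"
    using convergent_imp_Bseq[OF convergentI[OF lim]] unfolding Bseq_def by blast
  have zB: "norm (z n) \<le> norm a + K" for n
    using norm_triangle_sub[of "z n" a] K[of n] norm_ge_zero[of "z n - b"]
    unfolding sigma_xy_def real_norm_def by linarith
  obtain x where x: "weak_limsup_point z x"
    by (rule reflexive_bounded_seq_weak_limsup_point[of z "norm a + K", OF refl zB])
  have zC: "z n - a \<in> C" "z n - b \<in> C" for n
    using z(1)[of n] by (simp_all add: upper_bounds_c_pair)
  have "x - a \<in> C" using weak_limsup_point_closed_cone[OF C(1,2) x zC(1)] .
  moreover have "x - b \<in> C" using weak_limsup_point_closed_cone[OF C(1,2) x zC(2)] .
  ultimately have "x \<in> ?U" unfolding upper_bounds_c_pair by simp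
  moreover have "?s x \<le> ?s w" if "w \<in> ?U" for w
    using weak_limsup_point_sigma_le[OF x lim] cInf_lower[OF imageI[OF that] bdd] unfolding m_def
    by linarith
  ultimately show ?thesis using that unfolding is_minimizer_def by blast
qed

lemma strictly_convexD:
  assumes "strictly_convex TYPE('a::real_normed_vector)" "norm (x + y) = norm x + norm (y :: 'a)"
  obtains t where "0 \<le> t" "x = t *\<^sub>R y \<or> y = t *\<^sub>R x"
  using assms unfolding strictly_convex_def by blast

lemma strictly_convex_norm_add_eq:
  assumes sc: "strictly_convex TYPE('a::real_normed_vector)"
    and add: "norm (u + v) = norm u + norm v" and eq: "norm u = norm (v :: 'a)"
  shows "u = v"
proof -
  have *: "x = y" if "x = t *\<^sub>R y" "0 \<le> t" "norm x = norm y" for x y :: 'a and t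
  proof -
    have "norm x = t * norm y" using that(1,2) by simp
    then have "(t - 1) * norm y = 0" using that(3) by (simp add: algebra_simps)
    then have "t = 1 \<or> y = 0" by simp
    then show ?thesis using that(1) by (elim disjE) simp_all
  qed
  obtain t where "0 \<le> t" "u = t *\<^sub>R v \<or> v = t *\<^sub>R u"
    using strictly_convexD[OF sc add] by blast
  then show ?thesis using *[of u t v] *[of v t u] eq by argo
qed

lemma strictly_convex_norm_add_comparable:
  assumes sc: "strictly_convex TYPE('a::real_normed_vector)" and C: "convex_cone C"
    and uv: "u \<in> C" "v \<in> C" and add: "norm (u + v) = norm u + norm (v :: 'a)"
  shows "u - v \<in> C \<or> v - u \<in> C"
proof -
  have *: "x - y \<in> C \<or> y - x \<in> C" if "x = t *\<^sub>R y" "y \<in> C" for x y :: 'a and t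
  proof (cases "1 \<le> t")
    case True
    then show ?thesis using that convex_cone_scaleR[OF C, of "t - 1" y] by (simp add: algebra_simps)
  next
    case False
    then show ?thesis using that convex_cone_scaleR[OF C, of "1 - t" y] by (simp add: algebra_simps)
  qed
  obtain t where "u = t *\<^sub>R v \<or> v = t *\<^sub>R u"
    using strictly_convexD[OF sc add] by blast
  then show ?thesis using *[of u t v] *[of v t u] uv by argo
qed

lemma monotone_normD:
  assumes "monotone_norm C" "x \<in> C" "y - x \<in> C"
  shows "norm x \<le> norm y"
  using assms unfolding monotone_norm_def cle_def by auto

lemma sigma_eq_norm_eq:
  assumes mono: "monotone_norm C" and z1: "z1 - a \<in> C" "z1 - b \<in> C" and ord: "z2 - z1 \<in> C"
    and eq: "sigma_xy a b z1 = sigma_xy a b z2"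
  shows "norm (z1 - a) = norm (z2 - a)"
proof -
  have "norm (z1 - a) \<le> norm (z2 - a)" "norm (z1 - b) \<le> norm (z2 - b)"
    using ord by (auto intro!: monotone_normD[OF mono] z1)
  then show ?thesis using eq unfolding sigma_xy_def by linarith
qed

lemma sigma_minimizer_unique:
  fixes C :: "'a::real_normed_vector set"
  assumes C: "convex_cone C" and mono: "monotone_norm C" and sc: "strictly_convex TYPE('a)"
    and z1: "is_minimizer (upper_bounds_c C {a, b}) (sigma_xy a b) z1"
    and z2: "is_minimizer (upper_bounds_c C {a, b}) (sigma_xy a b) z2"
  shows "z1 = z2"
proof -
  let ?U = "upper_bounds_c C {a, b}" and ?s = "sigma_xy a b"
  have U: "z1 - a \<in> C" "z1 - b \<in> C" "z2 - a \<in> C" "z2 - b \<in> C"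
    using z1 z2 unfolding is_minimizer_def upper_bounds_c_pair by auto
  have eq: "?s z1 = ?s z2" using z1 z2 unfolding is_minimizer_def by (meson order_antisym)
  define w where "w = (1/2) *\<^sub>R (z1 + z2)"
  have w: "w - a = (1/2) *\<^sub>R ((z1 - a) + (z2 - a))" "w - b = (1/2) *\<^sub>R ((z1 - b) + (z2 - b))"
    unfolding w_def by (simp_all add: algebra_simps flip: scaleR_add_left)
  have "w \<in> ?U"
    unfolding upper_bounds_c_pair mem_Collect_eq w
    using U by (intro conjI convex_cone_scaleR[OF C] convex_cone_add[OF C]) simp_all
  then have "?s z1 \<le> ?s w" using z1 unfolding is_minimizer_def by blast
  moreover have "2 * ?s w = norm ((z1 - a) + (z2 - a)) + norm ((z1 - b) + (z2 - b))"
    unfolding sigma_xy_def w by simp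
  moreover note norm_triangle_ineq[of "z1 - a" "z2 - a"] norm_triangle_ineq[of "z1 - b" "z2 - b"]
  ultimately have add: "norm ((z1 - a) + (z2 - a)) = norm (z1 - a) + norm (z2 - a)"
    using eq unfolding sigma_xy_def by argo
  have "(z1 - a) - (z2 - a) \<in> C \<or> (z2 - a) - (z1 - a) \<in> C"
    by (rule strictly_convex_norm_add_comparable[OF sc C U(1,3) add])
  then have "norm (z1 - a) = norm (z2 - a)"
    using sigma_eq_norm_eq[OF mono U(1,2) _ eq] sigma_eq_norm_eq[OF mono U(3,4) _ eq[symmetric]] by auto
  then have "z1 - a = z2 - a" by (rule strictly_convex_norm_add_eq[OF sc add])
  then show ?thesis by simp
qed

lemma unique_sigma_minimizer_min_upper_bound:
  assumes mono: "monotone_norm C"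
    and x: "is_minimizer (upper_bounds_c C {a, b}) (sigma_xy a b) x"
    and uniq: "\<And>y. is_minimizer (upper_bounds_c C {a, b}) (sigma_xy a b) y \<Longrightarrow> y = x"
  shows "x \<in> min_upper_bounds_c C {a, b}"
proof -
  have "w = x" if w: "w \<in> upper_bounds_c C {a, b}" and "x - w \<in> C" for w
  proof (rule uniq)
    have "norm (w - a) \<le> norm (x - a)" "norm (w - b) \<le> norm (x - b)"
      using w \<open>x - w \<in> C\<close> unfolding upper_bounds_c_pair by (auto intro!: monotone_normD[OF mono])
    then have "sigma_xy a b w \<le> sigma_xy a b x" unfolding sigma_xy_def by simp
    then show "is_minimizer (upper_bounds_c C {a, b}) (sigma_xy a b) w"
      using x w unfolding is_minimizer_def by fastforce
  qed
  then show ?thesis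
    using x unfolding min_upper_bounds_c_def is_minimizer_def by (auto simp: cle_def upper_bounds_c_def)
qed

lemma is_minimizer_subset_unique:
  assumes x: "is_minimizer S f x" "x \<in> T" and T: "T \<subseteq> S"
    and uniq: "\<And>y. is_minimizer S f y \<Longrightarrow> y = x"
  shows "is_minimizer T f y \<longleftrightarrow> y = x"
proof
  assume y: "is_minimizer T f y"
  then have "f y \<le> f x" using x(2) unfolding is_minimizer_def by blast
  then have "is_minimizer S f y" using x(1) y T unfolding is_minimizer_def by force
  then show "y = x" by (rule uniq)
qed (use x T in \<open>auto simp: is_minimizer_def\<close>)

lemma the_minimizer_eqI:
  assumes "\<And>y. is_minimizer S f y \<longleftrightarrow> y = x"
  shows "has_unique_minimizer S f" "the_minimizer S f = x"
  using assms unfolding has_unique_minimizer_def the_minimizer_def by auto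

lemma convex_cone_if_proper_cone: "proper_cone C \<Longrightarrow> convex_cone C"
  unfolding proper_cone_def convex_cone_iff by blast

lemma sigma_quasi_suprema_pair:
  fixes C :: "'a::real_normed_vector set"
  assumes C: "convex_cone C" "closed C" "generating_cone C" and mono: "monotone_norm C"
    and sc: "strictly_convex TYPE('a)" and refl: "reflexive_space TYPE('a)"
  shows "has_unique_minimizer (upper_bounds_c C {a, b}) (sigma_xy a b)"
    and "min_upper_bounds_c C {a, b} \<noteq> {}"
    and "has_unique_minimizer (min_upper_bounds_c C {a, b}) (sigma_xy a b)"
    and "upsilon_qsup C a b = mu_qsup C a b"
proof -
  let ?U = "upper_bounds_c C {a, b}" and ?M = "min_upper_bounds_c C {a, b}"
  obtain z where z: "is_minimizer ?U (sigma_xy a b) z"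
    using sigma_minimizer_exists[OF C refl] by blast
  have U: "is_minimizer ?U (sigma_xy a b) y \<longleftrightarrow> y = z" for y
    using sigma_minimizer_unique[OF C(1) mono sc _ z] z by blast
  have "z \<in> ?M" using unique_sigma_minimizer_min_upper_bound[OF mono z] U by blast
  moreover have "?M \<subseteq> ?U" unfolding min_upper_bounds_c_def by blast
  ultimately have M: "is_minimizer ?M (sigma_xy a b) y \<longleftrightarrow> y = z" for y
    using is_minimizer_subset_unique[OF z] U by blast
  show "has_unique_minimizer ?U (sigma_xy a b)" "has_unique_minimizer ?M (sigma_xy a b)"
    using the_minimizer_eqI[OF U] the_minimizer_eqI[OF M] by blast+
  show "?M \<noteq> {}" using \<open>z \<in> ?M\<close> by blast
  show "upsilon_qsup C a b = mu_qsup C a b"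
    using the_minimizer_eqI[OF U] the_minimizer_eqI[OF M] unfolding upsilon_qsup_def mu_qsup_def by simp
qed

theorem corollary6p2:
  fixes C :: "'a::banach set"
  assumes "proper_cone C" and "closed C" and "generating_cone C"
    and "monotone_norm C"
    and "strictly_convex TYPE('a)"
    and "reflexive_space TYPE('a)"
  shows "upsilon_quasi_lattice C \<and> mu_quasi_lattice C \<and>
         (\<forall>x y. upsilon_qsup C x y = mu_qsup C x y)"
proof -
  have C: "convex_cone C" using assms(1) by (rule convex_cone_if_proper_cone)
  note pair = sigma_quasi_suprema_pair[OF C assms(2,3,4,5,6)]
  show ?thesis
    using assms(2) pair upper_bounds_c_pair_nonempty[OF assms(3)]
    unfolding upsilon_quasi_lattice_def mu_quasi_lattice_def by blast
qed

end
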